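(* Let $d\geq 2$ and $n\geq 1$ be integers, let $k$ be an integer with $0\leq k\leq\lfloor\log_d n\rfloor$, and let $\mathbf d=(1,d,d^2,\ldots,d^k)$. Let $\mathbf p_{\mathbf d,d}(n)$ denote the number of integer tuples $(x_0,\ldots,x_k)$ with $\sum_{i=0}^k d^ix_i=n$, $x_i\geq 0$ and $x_i\equiv 0$ or $x_i\equiv 1\pmod d$ for all $i$. Then $$\mathbf p_{\mathbf d,d}(n)=\frac{1}{k!}\sum_{\substack{\varepsilon\in\{0,1\}^{k+1},\ 0\leq j_i\leq d^{k-i}-1,\ 0\leq i\leq k-1\\ \sum_{i=0}^{k-1}d^{i+1}j_i+\sum_{i=0}^k d^i\varepsilon_i\equiv n\pmod{d^{k+1}}}}\ \prod_{\ell=1}^{k}\left(\frac{n-\sum_{i=0}^{k-1}d^{i+1}j_i-\sum_{i=0}^k d^i\varepsilon_i}{d^{k+1}}+\ell\right),$$ where $\varepsilon=(\varepsilon_0,\ldots,\varepsilon_k)$. Moreover, the polynomial part of $\mathbf p_{\mathbf d,d}$ is $$P_{\mathbf d,d}(n)=\frac{1}{k!\,d^{k+1}}\sum_{\varepsilon\in\{0,1\}^{k+1},\ 0\leq j_i\leq d^{k-i}-1,\ 0\leq i\leq k-1}\ \prod_{\ell=1}^{k}\left(\frac{n-\sum_{i=0}^{k-1}d^{i+1}j_i-\sum_{i=0}^k d^i\varepsilon_i}{d^{k+1}}+\ell\right).$$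
   Context: The polynomial part $P_{\mathbf d,d}(n)$ of $\mathbf p_{\mathbf d,d}$ is the polynomial in $n$ given by the coefficient of $t^{-1}$ in the Laurent expansion at $t=0$ of $e^{nt}\prod_{i=0}^k\dfrac{1+e^{-d^it}}{1-e^{-d^{i+1}t}}$. *)

theory Defs
  imports "HOL-Complex_Analysis.Complex_Analysis"
begin

definition pdd :: "nat \<Rightarrow> nat \<Rightarrow> nat \<Rightarrow> nat" where
  "pdd d k n = card {x :: nat \<Rightarrow> nat. (\<forall>i>k. x i = 0) \<and>
      (\<Sum>i\<le>k. d ^ i * x i) = n \<and> (\<forall>i\<le>k. x i mod d = 0 \<or> x i mod d = 1)}"

definition idx :: "nat \<Rightarrow> nat \<Rightarrow> ((nat \<Rightarrow> nat) \<times> (nat \<Rightarrow> nat)) set" where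
  "idx d k = (PiE {..k} (\<lambda>_. {0,1})) \<times> (PiE {..<k} (\<lambda>i. {0..d ^ (k - i) - 1}))"

definition shift :: "nat \<Rightarrow> nat \<Rightarrow> (nat \<Rightarrow> nat) \<Rightarrow> (nat \<Rightarrow> nat) \<Rightarrow> nat" where
  "shift d k e j = (\<Sum>i<k. d ^ (i + 1) * j i) + (\<Sum>i\<le>k. d ^ i * e i)"

definition gen_fun :: "nat \<Rightarrow> nat \<Rightarrow> complex \<Rightarrow> complex \<Rightarrow> complex" where
  "gen_fun d k z t = exp (z * t) *
     (\<Prod>i\<le>k. (1 + exp (- (of_nat (d ^ i)) * t)) / (1 - exp (- (of_nat (d ^ (i + 1))) * t)))"

text \<open>Polynomial part: coefficient of t^{-1} in the Laurent expansion at 0, i.e. the residue at 0.\<close>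
definition poly_part :: "nat \<Rightarrow> nat \<Rightarrow> complex \<Rightarrow> complex" where
  "poly_part d k z = residue (gen_fun d k z) 0"

end

(*
  Every admissible tuple is uniquely x_i = e_i + d (j_i + d^(k-i) a_i) with e_i in {0,1},
  0 <= j_i < d^(k-i) (j_k = 0) and a_i >= 0, and then sum_i d^i x_i = shift(e,j) + d^(k+1) sum_i a_i.
  So p_{d,d}(n) sums, over the (e,j) with shift(e,j) = n mod d^(k+1), the number of weak
  compositions of N = (n - shift(e,j)) / d^(k+1) into k+1 parts, i.e. (N+k choose k), which is the
  product (N+1)...(N+k)/k!.  As shift(e,j) <= k d^(k+1) + 1, a congruent shift exceeding n gives
  N in {-k,...,-1}, where the product vanishes.

  With q = e^(-t) the same decomposition is the identity
    prod_i (1 + q^(d^i)) / (1 - q^(d^(i+1))) = sum_(e,j) q^shift(e,j) / (1 - q^(d^(k+1)))^(k+1),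
  so the generating function is a finite sum of kernels e^(wt) / (1 - e^(-ct))^(k+1).  The residue
  of such a kernel at 0 follows by induction on k: differentiating the order-k kernel at w + c
  gives a combination of the order-k and order-(k+1) kernels, and a derivative has zero residue.
*)
theory Submission
  imports Defs
begin

lemma prod_add_of_nat_eq_pochhammer:
  fixes x :: "'a::comm_semiring_1"
  shows "(\<Prod>l = 1..k. x + of_nat l) = pochhammer (x + 1) k"
  by (simp add: pochhammer_prod prod.atLeast1_atMost_eq atLeast0LessThan ac_simps)

lemma finite_idx: "finite (idx d k)"
  unfolding idx_def by (auto intro!: finite_PiE)

definition weak_compositions :: "nat \<Rightarrow> nat \<Rightarrow> (nat \<Rightarrow> nat) set" where
  "weak_compositions k N = {a. (\<forall>i>k. a i = 0) \<and> (\<Sum>i\<le>k. a i) = N}"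

lemma bij_betw_weak_compositions_lists:
  "bij_betw (\<lambda>a. map a [0..<Suc k]) (weak_compositions k N) {l. length l = Suc k \<and> sum_list l = N}"
proof (rule bij_betw_byWitness[where f' = "\<lambda>l i. if i \<le> k then l ! i else 0"])
  have sum_eq: "sum_list (map a [0..<Suc k]) = (\<Sum>i\<le>k. a i)" for a :: "nat \<Rightarrow> nat"
    by (simp add: interv_sum_list_conv_sum_set_nat atLeast0LessThan lessThan_Suc_atMost del: upt_Suc)
  have map_nth: "map (\<lambda>i. if i \<le> k then l ! i else 0) [0..<Suc k] = l" if "length l = Suc k" for l :: "nat list"
    using that by (auto intro!: nth_equalityI simp del: upt_Suc)
  show "\<forall>a\<in>weak_compositions k N. (\<lambda>i. if i \<le> k then map a [0..<Suc k] ! i else 0) = a"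
    unfolding weak_compositions_def by (auto simp: fun_eq_iff nth_map_upt less_Suc_eq_le simp del: upt_Suc)
  show "\<forall>l\<in>{l. length l = Suc k \<and> sum_list l = N}. map (\<lambda>i. if i \<le> k then l ! i else 0) [0..<Suc k] = l"
    using map_nth by blast
  show "(\<lambda>a. map a [0..<Suc k]) ` weak_compositions k N \<subseteq> {l. length l = Suc k \<and> sum_list l = N}"
    unfolding weak_compositions_def using sum_eq by (auto simp del: upt_Suc)
  show "(\<lambda>l i. if i \<le> k then l ! i else 0) ` {l. length l = Suc k \<and> sum_list l = N} \<subseteq> weak_compositions k N"
  proof (rule image_subsetI)
    fix l :: "nat list" assume "l \<in> {l. length l = Suc k \<and> sum_list l = N}"
    then have l: "length l = Suc k" "sum_list l = N" by simp_all
    then show "(\<lambda>i. if i \<le> k then l ! i else 0) \<in> weak_compositions k N"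
      unfolding weak_compositions_def using map_nth[OF l(1)] sum_eq[of "\<lambda>i. if i \<le> k then l ! i else 0"]
      by simp
  qed
qed

lemma card_weak_compositions: "card (weak_compositions k N) = (N + k) choose k"
proof -
  have "card (weak_compositions k N) = card {l. length l = Suc k \<and> sum_list l = N}"
    using bij_betw_weak_compositions_lists bij_betw_same_card by blast
  also have "\<dots> = (N + k) choose k"
    unfolding card_length_sum_list by (simp add: binomial_symmetric[of N "N + k", simplified])
  finally show ?thesis .
qed

lemma finite_weak_compositions: "finite (weak_compositions k N)"
  using card_weak_compositions[of k N] by (intro card_ge_0_finite) simp

definition tuple_of_digits :: "nat \<Rightarrow> nat \<Rightarrow> (nat \<Rightarrow> nat) \<Rightarrow> (nat \<Rightarrow> nat) \<Rightarrow> (nat \<Rightarrow> nat) \<Rightarrow> nat \<Rightarrow> nat" where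
  "tuple_of_digits d k e j a i =
     (if i \<le> k then e i + d * ((if i < k then j i else 0) + d ^ (k - i) * a i) else 0)"

definition digits_of_tuple :: "nat \<Rightarrow> nat \<Rightarrow> (nat \<Rightarrow> nat) \<Rightarrow> ((nat \<Rightarrow> nat) \<times> (nat \<Rightarrow> nat)) \<times> (nat \<Rightarrow> nat)" where
  "digits_of_tuple d k x =
     ((restrict (\<lambda>i. x i mod d) {..k}, restrict (\<lambda>i. x i div d mod d ^ (k - i)) {..<k}),
      (\<lambda>i. if i \<le> k then x i div d div d ^ (k - i) else 0))"

lemma weighted_sum_tuple_of_digits:
  "(\<Sum>i\<le>k. d ^ i * tuple_of_digits d k e j a i) = shift d k e j + d ^ (k + 1) * (\<Sum>i\<le>k. a i)"
proof -
  have "d ^ i * tuple_of_digits d k e j a i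
      = d ^ i * e i + d ^ (i + 1) * (if i < k then j i else 0) + d ^ (k + 1) * a i" if "i \<le> k" for i
  proof -
    have "i + 1 + (k - i) = k + 1" using that by simp
    then have p: "d ^ (i + 1) * d ^ (k - i) = d ^ (k + 1)" by (metis power_add)
    have "d ^ i * tuple_of_digits d k e j a i
        = d ^ i * e i + d ^ (i + 1) * (if i < k then j i else 0) + d ^ (i + 1) * d ^ (k - i) * a i"
      using that unfolding tuple_of_digits_def by (simp add: algebra_simps)
    then show ?thesis by (simp only: p)
  qed
  then have "(\<Sum>i\<le>k. d ^ i * tuple_of_digits d k e j a i)
      = (\<Sum>i\<le>k. d ^ i * e i) + (\<Sum>i\<le>k. d ^ (i + 1) * (if i < k then j i else 0)) + d ^ (k + 1) * (\<Sum>i\<le>k. a i)"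
    by (simp add: sum.distrib sum_distrib_left)
  also have "(\<Sum>i\<le>k. d ^ (i + 1) * (if i < k then j i else 0)) = (\<Sum>i<k. d ^ (i + 1) * j i)"
    by (simp flip: lessThan_Suc_atMost)
  finally show ?thesis unfolding shift_def by simp
qed

lemma tuple_of_digits_of_tuple:
  assumes "\<forall>i>k. x i = 0"
  shows "(\<lambda>((e, j), a). tuple_of_digits d k e j a) (digits_of_tuple d k x) = x"
proof
  fix i
  show "(\<lambda>((e, j), a). tuple_of_digits d k e j a) (digits_of_tuple d k x) i = x i"
  proof (cases "i \<le> k")
    case True
    then have "(if i < k then x i div d mod d ^ (k - i) else 0) + d ^ (k - i) * (x i div d div d ^ (k - i))
        = x i div d"
      by (cases "i < k") auto
    then show ?thesis
      using True unfolding digits_of_tuple_def tuple_of_digits_def by simp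
  next
    case False
    then show ?thesis
      using assms unfolding digits_of_tuple_def tuple_of_digits_def by simp
  qed
qed

lemma
  assumes "e i < d" and "i \<le> k"
  shows tuple_of_digits_mod: "tuple_of_digits d k e j a i mod d = e i"
    and tuple_of_digits_div: "tuple_of_digits d k e j a i div d = (if i < k then j i else 0) + d ^ (k - i) * a i"
  using assms unfolding tuple_of_digits_def by auto

lemma idx_digits_less:
  assumes "d \<ge> 2" and "(e, j) \<in> idx d k"
  shows idx_fst_less: "i \<le> k \<Longrightarrow> e i < d" and idx_snd_less: "i < k \<Longrightarrow> j i < d ^ (k - i)"
proof -
  show "e i < d" if "i \<le> k"
  proof -
    have "e i \<in> {0, 1}" using assms(2) that unfolding idx_def by (auto simp: PiE_iff)
    then show ?thesis using assms(1) by auto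
  qed
  show "j i < d ^ (k - i)" if "i < k"
  proof -
    have "j i \<le> d ^ (k - i) - 1" using assms(2) that unfolding idx_def by (auto simp: PiE_iff)
    moreover have "d ^ (k - i) > 0" using assms(1) by simp
    ultimately show ?thesis by linarith
  qed
qed

lemma digits_of_tuple_of_digits:
  assumes "d \<ge> 2" and ej: "(e, j) \<in> idx d k" and a: "\<forall>i>k. a i = 0"
  shows "digits_of_tuple d k (tuple_of_digits d k e j a) = ((e, j), a)"
proof -
  have extensional: "e \<in> extensional {..k}" "j \<in> extensional {..<k}"
    using ej unfolding idx_def by (auto simp: PiE_iff)
  note e_less = idx_fst_less[OF assms(1,2)] and j_less = idx_snd_less[OF assms(1,2)]
  have "restrict (\<lambda>i. tuple_of_digits d k e j a i mod d) {..k} = e"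
    using extensional(1) e_less tuple_of_digits_mod by (auto simp: fun_eq_iff extensional_def)
  moreover have "restrict (\<lambda>i. tuple_of_digits d k e j a i div d mod d ^ (k - i)) {..<k} = j"
    using extensional(2) e_less j_less tuple_of_digits_div by (auto simp: fun_eq_iff extensional_def)
  moreover have "(\<lambda>i. if i \<le> k then tuple_of_digits d k e j a i div d div d ^ (k - i) else 0) = a"
  proof (rule ext)
    fix i
    show "(if i \<le> k then tuple_of_digits d k e j a i div d div d ^ (k - i) else 0) = a i"
    proof (cases "i \<le> k")
      case True
      have div_eq: "(r + m * c) div m = c" if "r < m" for r m c :: nat
        using that by simp
      have "(if i < k then j i else 0) < d ^ (k - i)"
        using j_less assms(1) by simp
      then have "tuple_of_digits d k e j a i div d div d ^ (k - i) = a i"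
        unfolding tuple_of_digits_div[where e = e and i = i, OF e_less[OF True] True] by (rule div_eq)
      then show ?thesis
        using True by simp
    qed (use a in simp)
  qed
  ultimately show ?thesis
    unfolding digits_of_tuple_def by simp
qed

lemma bij_betw_tuple_of_digits:
  assumes "d \<ge> 2"
  shows "bij_betw (\<lambda>((e, j), a). tuple_of_digits d k e j a) (idx d k \<times> {a. \<forall>i>k. a i = 0})
           {x. (\<forall>i>k. x i = 0) \<and> (\<forall>i\<le>k. x i mod d = 0 \<or> x i mod d = 1)}"
proof -
  define f where "f = (\<lambda>((e, j), a). tuple_of_digits d k e j a)"
  have left: "\<forall>q\<in>idx d k \<times> {a. \<forall>i>k. a i = 0}. digits_of_tuple d k (f q) = q"
    unfolding f_def using digits_of_tuple_of_digits[OF assms] by auto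
  have right: "\<forall>x\<in>{x. (\<forall>i>k. x i = 0) \<and> (\<forall>i\<le>k. x i mod d = 0 \<or> x i mod d = 1)}. f (digits_of_tuple d k x) = x"
    unfolding f_def using tuple_of_digits_of_tuple by blast
  have "tuple_of_digits d k e j a i mod d \<in> {0, 1}" if ej: "(e, j) \<in> idx d k" and "i \<le> k" for e j a i
  proof -
    have "tuple_of_digits d k e j a i mod d = e i"
      using idx_fst_less[OF assms ej] \<open>i \<le> k\<close> tuple_of_digits_mod by blast
    then show ?thesis
      using ej \<open>i \<le> k\<close> unfolding idx_def by (auto simp: PiE_iff)
  qed
  moreover have "tuple_of_digits d k e j a i = 0" if "i > k" for e j a i
    using that by (simp add: tuple_of_digits_def)
  ultimately have image: "f ` (idx d k \<times> {a. \<forall>i>k. a i = 0})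
      \<subseteq> {x. (\<forall>i>k. x i = 0) \<and> (\<forall>i\<le>k. x i mod d = 0 \<or> x i mod d = 1)}"
    unfolding f_def by (auto simp only: mem_Collect_eq mem_Times_iff split: prod.splits)
  have "digits_of_tuple d k x \<in> idx d k \<times> {a. \<forall>i>k. a i = 0}"
    if x: "x \<in> {x. (\<forall>i>k. x i = 0) \<and> (\<forall>i\<le>k. x i mod d = 0 \<or> x i mod d = 1)}" for x
  proof -
    have "x i div d mod d ^ (k - i) \<le> d ^ (k - i) - 1" for i
      using assms by (simp add: le_diff_conv2 Suc_le_eq)
    moreover have "x i mod d \<in> {0, 1}" if "i \<le> k" for i
      using x that by auto
    ultimately show ?thesis
      unfolding idx_def digits_of_tuple_def by (simp add: Pi_iff)
  qed
  then have preimage: "digits_of_tuple d k ` {x. (\<forall>i>k. x i = 0) \<and> (\<forall>i\<le>k. x i mod d = 0 \<or> x i mod d = 1)}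
      \<subseteq> idx d k \<times> {a. \<forall>i>k. a i = 0}"
    by (rule image_subsetI)
  show ?thesis
    unfolding f_def[symmetric] by (rule bij_betw_byWitness[OF left right image preimage])
qed

lemma fibre_eq_weak_compositions:
  fixes D k :: nat
  assumes "D > 0"
  shows "{a. (\<forall>i>k. a i = 0) \<and> s + D * (\<Sum>i\<le>k. a i) = n}
           = (if s \<le> n \<and> D dvd n - s then weak_compositions k ((n - s) div D) else {})"
proof (cases "s \<le> n \<and> D dvd n - s")
  case True
  then obtain N where N: "n - s = D * N" by blast
  then have "s + D * m = n \<longleftrightarrow> m = (n - s) div D" for m
    using True assms by auto
  then show ?thesis
    using True unfolding weak_compositions_def by auto
next
  case False
  then have "s + D * m \<noteq> n" for m
    by auto
  then show ?thesis
    using False by auto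
qed

lemma finite_fibre:
  fixes D k :: nat
  assumes "D > 0"
  shows "finite {a. (\<forall>i>k. a i = 0) \<and> s + D * (\<Sum>i\<le>k. a i) = n}"
  unfolding fibre_eq_weak_compositions[OF assms] by (simp add: finite_weak_compositions)

lemma pochhammer_eq_0_if_less_shift:
  fixes D k :: nat
  assumes "D > 0" and "n < s" and "s \<le> n + k * D" and "D dvd s - n"
  shows "pochhammer ((real n - real s) / real D + 1) k = 0"
proof -
  obtain M where M: "s - n = D * M"
    using assms(4) by blast
  have "D * M \<le> D * k"
    using M assms(3) by (metis add.commute le_diff_conv mult.commute)
  moreover have "D * M \<noteq> 0"
    using M assms(2) by (metis zero_less_diff less_irrefl)
  ultimately have "M \<le> k" and "M \<ge> 1"
    using assms(1) by auto
  have "real s - real n = real D * real M"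
    using M assms(2) by (metis of_nat_diff of_nat_mult less_imp_le)
  then have "(real n - real s) / real D + 1 = - of_nat (M - 1)"
    using assms(1) \<open>M \<ge> 1\<close> by (simp add: field_simps of_nat_diff)
  moreover have "pochhammer (- of_nat (M - 1) :: real) k = 0"
    using \<open>M \<le> k\<close> \<open>M \<ge> 1\<close> by (intro pochhammer_of_nat_eq_0_lemma) simp
  ultimately show ?thesis
    by simp
qed

lemma real_card_fibre:
  fixes D k :: nat
  assumes "D > 0" and "s \<le> n + k * D"
  shows "real (card {a. (\<forall>i>k. a i = 0) \<and> s + D * (\<Sum>i\<le>k. a i) = n})
           = (if s mod D = n mod D then pochhammer ((real n - real s) / real D + 1) k / fact k else 0)"
proof (cases "s mod D = n mod D")
  case congruent: True
  show ?thesis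
  proof (cases "s \<le> n")
    case True
    then obtain N where N: "n - s = D * N"
      using congruent mod_eq_dvd_iff_nat by (metis dvd_def)
    then have "(real n - real s) / real D = real N"
      using True assms(1) by (simp add: field_simps flip: of_nat_diff of_nat_mult)
    moreover have "real ((N + k) choose k) = pochhammer (real N + 1) k / fact k"
      by (simp add: binomial_gbinomial gbinomial_pochhammer')
    ultimately show ?thesis
      unfolding fibre_eq_weak_compositions[OF assms(1)]
      using True N assms(1) congruent by (simp add: card_weak_compositions)
  next
    case False
    then have "pochhammer ((real n - real s) / real D + 1) k = 0"
      using assms congruent mod_eq_dvd_iff_nat[of n s D] by (intro pochhammer_eq_0_if_less_shift) auto
    then show ?thesis
      unfolding fibre_eq_weak_compositions[OF assms(1)] using False congruent by simp
  qed
next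
  case False
  then have no_fibre: "\<not> (s \<le> n \<and> D dvd n - s)"
    using mod_eq_dvd_iff_nat[of s n D] by auto
  show ?thesis
    unfolding fibre_eq_weak_compositions[OF assms(1)] if_not_P[OF no_fibre] using False by simp
qed

lemma shift_le:
  assumes "d \<ge> 1" and "(e, j) \<in> idx d k"
  shows "shift d k e j \<le> k * d ^ (k + 1) + 1"
proof -
  have e_le: "e i \<le> 1" if "i \<le> k" for i
    using assms(2) that unfolding idx_def by (force simp: PiE_iff)
  have j_le: "j i + 1 \<le> d ^ (k - i)" if "i < k" for i
  proof -
    have "j i \<le> d ^ (k - i) - 1"
      using assms(2) that unfolding idx_def by (auto simp: PiE_iff)
    moreover have "d ^ (k - i) \<ge> 1"
      using assms(1) by simp
    ultimately show ?thesis by linarith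
  qed
  define P where "P = (\<Sum>i<k. d ^ (i + 1))"
  have "(\<Sum>i<k. d ^ (i + 1) * j i) + P = (\<Sum>i<k. d ^ (i + 1) * (j i + 1))"
    unfolding P_def by (simp add: sum.distrib algebra_simps)
  also have "\<dots> \<le> (\<Sum>i<k. d ^ (i + 1) * d ^ (k - i))"
    using j_le by (intro sum_mono mult_le_mono2) auto
  also have "\<dots> = (\<Sum>i<k. d ^ (k + 1))"
  proof (intro sum.cong refl)
    fix i assume "i \<in> {..<k}"
    then have "i + 1 + (k - i) = k + 1" by simp
    then show "d ^ (i + 1) * d ^ (k - i) = d ^ (k + 1)" by (metis power_add)
  qed
  finally have j_part: "(\<Sum>i<k. d ^ (i + 1) * j i) + P \<le> k * d ^ (k + 1)"
    by simp
  have "(\<Sum>i\<le>k. d ^ i * e i) \<le> (\<Sum>i\<le>k. d ^ i)"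
    using e_le by (intro sum_mono) simp
  also have "\<dots> = 1 + P"
    unfolding P_def by (simp add: sum.atMost_shift)
  finally show ?thesis
    unfolding shift_def using j_part by linarith
qed

lemma pdd_eq_sum_card_fibres:
  assumes "d \<ge> 2"
  shows "pdd d k n = (\<Sum>(e, j)\<in>idx d k.
           card {a. (\<forall>i>k. a i = 0) \<and> shift d k e j + d ^ (k + 1) * (\<Sum>i\<le>k. a i) = n})"
proof -
  define f where "f = (\<lambda>((e, j), a). tuple_of_digits d k e j a)"
  define F where "F = (\<lambda>(e, j). {a. (\<forall>i>k. a i = 0) \<and> shift d k e j + d ^ (k + 1) * (\<Sum>i\<le>k. a i) = n})"
  define A where "A = idx d k \<times> {a. \<forall>i>k. a i = (0::nat)}"
  have bij: "bij_betw f A {x. (\<forall>i>k. x i = 0) \<and> (\<forall>i\<le>k. x i mod d = 0 \<or> x i mod d = 1)}"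
    unfolding f_def A_def by (rule bij_betw_tuple_of_digits[OF assms])
  have Sigma_eq: "Sigma (idx d k) F = {q \<in> A. (\<Sum>i\<le>k. d ^ i * f q i) = n}"
    unfolding A_def F_def f_def by (auto simp: weighted_sum_tuple_of_digits)
  have "{x. (\<forall>i>k. x i = 0) \<and> (\<Sum>i\<le>k. d ^ i * x i) = n \<and> (\<forall>i\<le>k. x i mod d = 0 \<or> x i mod d = 1)}
      = f ` Sigma (idx d k) F"
    unfolding Sigma_eq using bij_betw_imp_surj_on[OF bij] by auto
  moreover have "inj_on f (Sigma (idx d k) F)"
    using bij_betw_imp_inj_on[OF bij] by (rule inj_on_subset) (simp add: Sigma_eq)
  ultimately have "pdd d k n = card (Sigma (idx d k) F)"
    unfolding pdd_def by (simp add: card_image)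
  also have "\<dots> = (\<Sum>p\<in>idx d k. card (F p))"
    using finite_idx finite_fibre assms unfolding F_def by (intro card_SigmaI) auto
  finally show ?thesis
    unfolding F_def by (simp add: case_prod_unfold)
qed

lemma real_pdd_eq_sum_pochhammer:
  assumes "d \<ge> 2" and "n \<ge> 1"
  shows "real (pdd d k n) = (\<Sum>(e, j) \<in> {(e, j) \<in> idx d k. shift d k e j mod d ^ (k + 1) = n mod d ^ (k + 1)}.
           pochhammer ((real n - real (shift d k e j)) / real d ^ (k + 1) + 1) k) / fact k"
proof -
  have "real (pdd d k n) = (\<Sum>p\<in>idx d k.
      if shift d k (fst p) (snd p) mod d ^ (k + 1) = n mod d ^ (k + 1)
      then pochhammer ((real n - real (shift d k (fst p) (snd p))) / real (d ^ (k + 1)) + 1) k / fact k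
      else 0)"
    unfolding pdd_eq_sum_card_fibres[OF assms(1)] of_nat_sum case_prod_unfold
  proof (intro sum.cong refl real_card_fibre)
    fix p assume "p \<in> idx d k"
    then show "shift d k (fst p) (snd p) \<le> n + k * d ^ (k + 1)"
      using shift_le[of d "fst p" "snd p" k] assms by simp
  qed (use assms in simp)
  also have "\<dots> = (\<Sum>p\<in>{p \<in> idx d k. shift d k (fst p) (snd p) mod d ^ (k + 1) = n mod d ^ (k + 1)}.
      pochhammer ((real n - real (shift d k (fst p) (snd p))) / real (d ^ (k + 1)) + 1) k / fact k)"
    by (rule sum.inter_filter[OF finite_idx, symmetric])
  finally show ?thesis
    by (simp add: sum_divide_distrib case_prod_unfold)
qed

lemma exp_neq_1_if_norm_less:
  fixes w :: complex
  assumes "w \<noteq> 0" and "norm w < 2 * pi"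
  shows "exp w \<noteq> 1"
proof
  assume "exp w = 1"
  then obtain m :: int where re: "Re w = 0" and im: "Im w = of_int (2 * m) * pi"
    by (auto simp: exp_eq_1)
  with assms(1) have "m \<noteq> 0" by (auto simp: complex_eq_iff)
  then have "2 * pi \<le> \<bar>Im w\<bar>"
    unfolding im by (simp add: abs_mult)
  with abs_Im_le_cmod[of w] assms(2) show False by linarith
qed

lemma one_minus_exp_neq_0:
  fixes t :: complex
  assumes "c > 0" and "t \<noteq> 0" and "norm t < 2 * pi / c"
  shows "1 - exp (- of_real c * t) \<noteq> 0"
proof -
  have "norm (- of_real c * t) < 2 * pi"
    using assms by (simp add: norm_mult field_simps)
  with assms exp_neq_1_if_norm_less[of "- of_real c * t"] show ?thesis by auto
qed

lemma residue_deriv_eq_0: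
  assumes "open S" and "z \<in> S"
    and deriv: "\<And>w. w \<in> S - {z} \<Longrightarrow> (F has_field_derivative f w) (at w)"
    and holo: "f holomorphic_on S - {z}"
  shows "residue f z = 0"
proof -
  obtain r where "r > 0" and r: "cball z r \<subseteq> S"
    using open_contains_cball assms(1,2) by blast
  have "(f has_contour_integral 2 * pi * \<i> * residue f z) (circlepath z r)"
    using base_residue[OF assms(1,2) \<open>r > 0\<close> holo r] .
  moreover have "(f has_contour_integral 0) (circlepath z r)"
  proof (rule Cauchy_theorem_primitive[of "S - {z}"])
    show "(F has_field_derivative f w) (at w within S - {z})" if "w \<in> S - {z}" for w
      using deriv[OF that] by (rule has_field_derivative_at_within)
    show "path_image (circlepath z r) \<subseteq> S - {z}"
      using r \<open>r > 0\<close> by (auto simp: path_image_circlepath)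
  qed auto
  ultimately show ?thesis
    using has_contour_integral_unique by fastforce
qed

lemma residue_sum:
  assumes "open S" and "z \<in> S" and "finite I"
    and "\<And>i. i \<in> I \<Longrightarrow> f i holomorphic_on S - {z}"
  shows "residue (\<lambda>t. \<Sum>i\<in>I. f i t) z = (\<Sum>i\<in>I. residue (f i) z)"
  using assms(3,4)
proof (induction I rule: finite_induct)
  case empty
  then show ?case by (simp add: residue_const)
next
  case (insert i I)
  then have "residue (\<lambda>t. f i t + (\<Sum>i\<in>I. f i t)) z = residue (f i) z + residue (\<lambda>t. \<Sum>i\<in>I. f i t) z"
    by (intro residue_add[OF assms(1,2)]) (auto intro!: holomorphic_intros)
  with insert show ?case by simp
qed

definition pole_kernel :: "real \<Rightarrow> nat \<Rightarrow> complex \<Rightarrow> complex \<Rightarrow> complex" where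
  "pole_kernel c k w t = exp (w * t) / (1 - exp (- of_real c * t)) ^ Suc k"

lemma pole_kernel_holomorphic:
  assumes "c > 0"
  shows "pole_kernel c k w holomorphic_on ball 0 (2 * pi / c) - {0}"
  unfolding pole_kernel_def using one_minus_exp_neq_0[OF assms]
  by (auto intro!: holomorphic_intros)

lemma residue_pole_kernel_0:
  assumes "c > 0"
  shows "residue (pole_kernel c 0 w) 0 = 1 / of_real c"
proof -
  have "residue (\<lambda>t. exp (w * t) / (1 - exp (- of_real c * t))) 0 = exp (w * 0) / of_real c"
  proof (rule residue_simple_pole_deriv[where s = UNIV])
    show "((\<lambda>t. 1 - exp (- of_real c * t)) has_field_derivative of_real c) (at 0)"
      by (auto intro!: derivative_eq_intros)
  qed (use assms in \<open>auto intro!: holomorphic_intros\<close>)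
  then show ?thesis
    unfolding pole_kernel_def by simp
qed

lemma pole_kernel_has_field_derivative:
  assumes nz: "1 - exp (- of_real c * t) \<noteq> 0"
  shows "(pole_kernel c k (w + of_real c) has_field_derivative
            (w + of_real c) * pole_kernel c k (w + of_real c) t
            - (of_nat (Suc k) * of_real c) * pole_kernel c (Suc k) w t) (at t)"
proof -
  have "exp (w * t) = exp ((w + of_real c) * t) * exp (- of_real c * t)"
    by (simp add: exp_add[symmetric] algebra_simps)
  then show ?thesis
    unfolding pole_kernel_def using nz
    by (auto intro!: derivative_eq_intros simp: field_simps power_add[symmetric] simp del: power_Suc)
qed

lemma residue_pole_kernel_Suc:
  assumes "c > 0"
  shows "residue (pole_kernel c (Suc k) w) 0
           = (w + of_real c) / (of_nat (Suc k) * of_real c) * residue (pole_kernel c k (w + of_real c)) 0"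
proof -
  let ?S = "ball 0 (2 * pi / c)"
  have S: "open ?S" "0 \<in> ?S" using assms by auto
  note holo = pole_kernel_holomorphic[OF assms]
  have "residue (\<lambda>t. (w + of_real c) * pole_kernel c k (w + of_real c) t
                     - (of_nat (Suc k) * of_real c) * pole_kernel c (Suc k) w t) 0 = 0"
    using S holo one_minus_exp_neq_0[OF assms]
    by (intro residue_deriv_eq_0[OF S, where F = "pole_kernel c k (w + of_real c)"]
          pole_kernel_has_field_derivative) (auto intro!: holomorphic_intros)
  moreover have "residue (\<lambda>t. (w + of_real c) * pole_kernel c k (w + of_real c) t
                     - (of_nat (Suc k) * of_real c) * pole_kernel c (Suc k) w t) 0
      = (w + of_real c) * residue (pole_kernel c k (w + of_real c)) 0
        - (of_nat (Suc k) * of_real c) * residue (pole_kernel c (Suc k) w) 0"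
    using holo by (simp add: residue_diff[OF S] residue_lmul[OF S] holomorphic_intros)
  ultimately have "(of_nat (Suc k) * of_real c) * residue (pole_kernel c (Suc k) w) 0
      = (w + of_real c) * residue (pole_kernel c k (w + of_real c)) 0"
    by simp
  moreover have "of_nat (Suc k) * (of_real c :: complex) \<noteq> 0"
    using assms by (simp del: of_nat_Suc)
  ultimately show ?thesis
    by (simp add: field_simps)
qed

lemma residue_pole_kernel:
  assumes "c > 0"
  shows "residue (pole_kernel c k w) 0 = pochhammer (w / of_real c + 1) k / (fact k * of_real c)"
proof (induction k arbitrary: w)
  case 0
  show ?case using residue_pole_kernel_0[OF assms] by simp
next
  case (Suc k)
  have "w / of_real c + 1 + 1 = (w + of_real c) / of_real c + 1"
    using assms by (simp add: field_simps)
  then show ?case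
    unfolding residue_pole_kernel_Suc[OF assms] Suc pochhammer_rec using assms
    by (simp add: field_simps)
qed

lemma sum_idx_power_shift:
  fixes q :: "'a::comm_semiring_1"
  assumes "d \<ge> 1"
  shows "(\<Sum>(e, j)\<in>idx d k. q ^ shift d k e j)
           = (\<Prod>i\<le>k. 1 + q ^ d ^ i) * (\<Prod>i<k. \<Sum>y<d ^ (k - i). q ^ (d ^ (i + 1) * y))"
proof -
  define PE where "PE = PiE {..k} (\<lambda>_::nat. {0::nat, 1})"
  define PJ where "PJ = PiE {..<k} (\<lambda>i. {0..d ^ (k - i) - 1})"
  have "(\<Sum>(e, j)\<in>idx d k. q ^ shift d k e j)
      = (\<Sum>e\<in>PE. \<Sum>j\<in>PJ. (\<Prod>i\<le>k. q ^ (d ^ i * e i)) * (\<Prod>i<k. q ^ (d ^ (i + 1) * j i)))"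
    unfolding idx_def PE_def PJ_def shift_def sum.cartesian_product[symmetric]
    by (simp add: power_add power_sum mult.commute)
  also have "\<dots> = (\<Sum>e\<in>PE. \<Prod>i\<le>k. q ^ (d ^ i * e i)) * (\<Sum>j\<in>PJ. \<Prod>i<k. q ^ (d ^ (i + 1) * j i))"
    by (simp add: sum_product)
  also have "(\<Sum>e\<in>PE. \<Prod>i\<le>k. q ^ (d ^ i * e i)) = (\<Prod>i\<le>k. \<Sum>y\<in>{0::nat, 1}. q ^ (d ^ i * y))"
    unfolding PE_def by (rule prod_sum_PiE[symmetric]) auto
  also have "(\<Sum>j\<in>PJ. \<Prod>i<k. q ^ (d ^ (i + 1) * j i)) = (\<Prod>i<k. \<Sum>y\<in>{0..d ^ (k - i) - 1}. q ^ (d ^ (i + 1) * y))"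
    unfolding PJ_def by (rule prod_sum_PiE[symmetric]) auto
  also have "\<dots> = (\<Prod>i<k. \<Sum>y<d ^ (k - i). q ^ (d ^ (i + 1) * y))"
  proof -
    have "{0..m - 1} = {..<m}" if "m > 0" for m :: nat
      using that by auto
    then have "{0..d ^ (k - i) - 1} = {..<d ^ (k - i)}" for i
      using assms by simp
    then show ?thesis by simp
  qed
  finally show ?thesis by simp
qed

lemma prod_quotient_eq_sum_idx_power_shift:
  fixes q :: "'a::field"
  assumes "d \<ge> 1" and nz: "\<And>i. i \<le> k \<Longrightarrow> 1 - q ^ d ^ (i + 1) \<noteq> 0"
  shows "(\<Prod>i\<le>k. (1 + q ^ d ^ i) / (1 - q ^ d ^ (i + 1)))
           = (\<Sum>(e, j)\<in>idx d k. q ^ shift d k e j) / (1 - q ^ d ^ (k + 1)) ^ (k + 1)"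
proof -
  define B where "B = 1 - q ^ d ^ (k + 1)"
  define A where "A = (\<Prod>i\<le>k. 1 + q ^ d ^ i)"
  define P where "P = (\<Prod>i<k. 1 - q ^ d ^ (i + 1))"
  have "B \<noteq> 0" and "P \<noteq> 0"
    using nz unfolding B_def P_def by (auto simp: prod_zero_iff)
  have geometric: "(\<Sum>y<d ^ (k - i). q ^ (d ^ (i + 1) * y)) = B / (1 - q ^ d ^ (i + 1))" if "i < k" for i
  proof -
    have "i + 1 + (k - i) = k + 1"
      using that by simp
    then have "d ^ (i + 1) * d ^ (k - i) = d ^ (k + 1)"
      by (metis power_add)
    then have "(q ^ d ^ (i + 1)) ^ d ^ (k - i) = q ^ d ^ (k + 1)"
      by (metis power_mult)
    then show ?thesis
      using nz[of i] that unfolding B_def by (simp add: power_mult sum_gp_strict)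
  qed
  have "(\<Prod>i\<le>k. (1 + q ^ d ^ i) / (1 - q ^ d ^ (i + 1))) = A / (P * B)"
    unfolding A_def P_def B_def prod_dividef by (simp flip: lessThan_Suc_atMost)
  also have "\<dots> = A * (B ^ k / P) / B ^ (k + 1)"
    using \<open>B \<noteq> 0\<close> \<open>P \<noteq> 0\<close> by (simp add: field_simps)
  also have "B ^ k / P = (\<Prod>i<k. B / (1 - q ^ d ^ (i + 1)))"
    unfolding P_def by (simp add: prod_dividef)
  also have "\<dots> = (\<Prod>i<k. \<Sum>y<d ^ (k - i). q ^ (d ^ (i + 1) * y))"
    by (intro prod.cong refl geometric[symmetric]) simp
  also have "A * \<dots> = (\<Sum>(e, j)\<in>idx d k. q ^ shift d k e j)"
    unfolding A_def sum_idx_power_shift[OF assms(1)] ..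
  finally show ?thesis unfolding B_def .
qed

lemma gen_fun_eq_sum_pole_kernel:
  assumes "d \<ge> 1" and "t \<noteq> 0" and "norm t < 2 * pi / real d ^ (k + 1)"
  shows "gen_fun d k z t = (\<Sum>(e, j)\<in>idx d k. pole_kernel (real d ^ (k + 1)) k (z - of_nat (shift d k e j)) t)"
proof -
  define q where "q = exp (- t)"
  have exp_q: "exp (- of_nat m * t) = q ^ m" for m
    unfolding q_def by (simp flip: exp_of_nat_mult)
  have nz: "1 - q ^ d ^ (i + 1) \<noteq> 0" if "i \<le> k" for i
  proof -
    have "real d ^ (i + 1) \<le> real d ^ (k + 1)"
      using that assms(1) by (simp add: power_increasing)
    then have "2 * pi / real d ^ (k + 1) \<le> 2 * pi / real d ^ (i + 1)"
      using assms(1) by (simp add: frac_le)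
    then have "1 - exp (- of_real (real d ^ (i + 1)) * t) \<noteq> 0"
      using assms by (intro one_minus_exp_neq_0) auto
    then show ?thesis
      using exp_q[of "d ^ (i + 1)"] by simp
  qed
  have "gen_fun d k z t = exp (z * t) * (\<Prod>i\<le>k. (1 + q ^ d ^ i) / (1 - q ^ d ^ (i + 1)))"
    unfolding gen_fun_def exp_q ..
  also have "\<dots> = exp (z * t) * ((\<Sum>(e, j)\<in>idx d k. q ^ shift d k e j) / (1 - q ^ d ^ (k + 1)) ^ (k + 1))"
    by (simp only: prod_quotient_eq_sum_idx_power_shift[OF assms(1) nz])
  also have "\<dots> = (\<Sum>(e, j)\<in>idx d k. exp ((z - of_nat (shift d k e j)) * t) / (1 - q ^ d ^ (k + 1)) ^ (k + 1))"
  proof -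
    have "exp ((z - of_nat s) * t) = exp (z * t) * q ^ s" for s
      by (simp add: exp_q[symmetric] exp_add[symmetric] algebra_simps)
    then show ?thesis
      by (simp add: sum_distrib_left sum_divide_distrib case_prod_unfold)
  qed
  finally show ?thesis
    unfolding pole_kernel_def using exp_q[of "d ^ (k + 1)"] by simp
qed

lemma poly_part_eq_sum_pochhammer:
  assumes "d \<ge> 1"
  shows "poly_part d k z = (\<Sum>(e, j)\<in>idx d k.
           pochhammer ((z - of_nat (shift d k e j)) / of_nat d ^ (k + 1) + 1) k) / (fact k * of_nat d ^ (k + 1))"
proof -
  define c where "c = real d ^ (k + 1)"
  have "c > 0" unfolding c_def using assms by simp
  have "poly_part d k z = residue (\<lambda>t. \<Sum>(e, j)\<in>idx d k. pole_kernel c k (z - of_nat (shift d k e j)) t) 0"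
    unfolding poly_part_def
  proof (rule residue_cong)
    show "\<forall>\<^sub>F t in at 0. gen_fun d k z t = (\<Sum>(e, j)\<in>idx d k. pole_kernel c k (z - of_nat (shift d k e j)) t)"
      unfolding eventually_at c_def using assms gen_fun_eq_sum_pole_kernel[OF assms]
      by (intro exI[of _ "2 * pi / real d ^ (k + 1)"]) auto
  qed simp
  also have "\<dots> = (\<Sum>(e, j)\<in>idx d k. residue (pole_kernel c k (z - of_nat (shift d k e j))) 0)"
    unfolding case_prod_unfold using \<open>c > 0\<close> finite_idx pole_kernel_holomorphic[OF \<open>c > 0\<close>]
    by (intro residue_sum[of "ball 0 (2 * pi / c)"]) auto
  also have "\<dots> = (\<Sum>(e, j)\<in>idx d k.
      pochhammer ((z - of_nat (shift d k e j)) / of_real c + 1) k / (fact k * of_real c))"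
    by (simp add: residue_pole_kernel[OF \<open>c > 0\<close>])
  finally show ?thesis
    unfolding c_def by (simp add: sum_divide_distrib case_prod_unfold)
qed

theorem corollary2p4:
  fixes d n k :: nat
  assumes "d \<ge> 2" and "n \<ge> 1" and "int k \<le> \<lfloor>log (real d) (real n)\<rfloor>"
  shows "real (pdd d k n) =
           1 / fact k * (\<Sum>(e, j) \<in> {(e, j) \<in> idx d k. shift d k e j mod d ^ (k + 1) = n mod d ^ (k + 1)}.
              \<Prod>l = 1..k. ((real n - real (shift d k e j)) / real d ^ (k + 1) + real l)) \<and>
         (\<forall>z :: complex. poly_part d k z =
           1 / (fact k * of_nat d ^ (k + 1)) * (\<Sum>(e, j) \<in> idx d k.
              \<Prod>l = 1..k. ((z - of_nat (shift d k e j)) / of_nat d ^ (k + 1) + of_nat l)))"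
proof -
  have "d \<ge> 1"
    using assms(1) by simp
  show ?thesis
    unfolding prod_add_of_nat_eq_pochhammer
    by (simp add: real_pdd_eq_sum_pochhammer[OF assms(1,2)] poly_part_eq_sum_pochhammer[OF \<open>d \<ge> 1\<close>])
qed

end
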